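(* Let $\mathcal{G}=\langle\mathbb{V},\mathbb{E}\rangle$ and the bijection $e$ be as in the context, let $u\in\mathbb{V}$, and let $\pi$ be an $\mathcal{H}^{(\ast)}$-partition of $\mathcal{P}(\mathcal{G},e)$ in which the gadget $\mathcal{N}_u$ is not well-oriented. Then there exists an $\mathcal{H}^{(\ast)}$-partition $\pi'$ of $\mathcal{P}(\mathcal{G},e)$ such that $|\pi'|\le|\pi|$, $\mathcal{N}_u$ is well-oriented in $\pi'$, and for every $w\in\mathbb{V}$ with $w\ne u$, $\mathcal{N}_w$ is well-oriented in $\pi$ if and only if $\mathcal{N}_w$ is well-oriented in $\pi'$.
   Context: Standing assumption: $\mathcal{G}=\langle\mathbb{V},\mathbb{E}\rangle$ is a finite directed graph with $\mathbb{V}\ne\emptyset$, without self-loops, in which every vertex has in-degree $1$ or out-degree $1$; let $m=|\mathbb{E}|$ and let $e:\mathbb{E}\to\{1,\dots,m\}$ be a bijection. For $v\in\mathbb{V}$ the gadget $\mathcal{N}_v=\langle\mathcal{V}_v,\mathcal{E}_v\rangle$ has vertices $\mathcal{V}_v=\{v_{i,j}:0\le i,j\le m\}$ (distinct for distinct $v$) and arcs $\mathcal{E}_v=\{\langle v_{i,j},v_{i,j+1}\rangle:0\le i\le m,0\le j<m\}\cup\{\langle v_{i,j},v_{i+1,j}\rangle:0\le i<m,0\le j\le m\}$. Let $\mathcal{L}_v=\{\{v_{i,0},\dots,v_{i,m}\}:0\le i\le m\}$ and $\mathcal{R}_v=\{\{v_{0,i},\dots,v_{m,i}\}:0\le i\le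 m\}$. The digraph $\mathcal{P}(\mathcal{G},e)$ has vertex set $\bigcup_{v\in\mathbb{V}}\mathcal{V}_v\cup\mathbb{E}$ (each arc of $\mathcal{G}$ is also a vertex) and arc set $\bigcup_{v\in\mathbb{V}}\mathcal{E}_v\cup\{\langle\langle v,u\rangle,v_{e(\langle v,u\rangle),0}\rangle:\langle v,u\rangle\in\mathbb{E}\}\cup\{\langle\langle v,u\rangle,u_{0,e(\langle v,u\rangle)}\rangle:\langle v,u\rangle\in\mathbb{E}\}$; it is a DAG. For a DAG $G$, a partition $\pi$ of its vertex set is an $\mathcal{H}^{(\ast)}$-partition if every induced subgraph $G[P]$, $P\in\pi$, has a directed Hamiltonian path and the quotient digraph $G/\pi$ (vertex set $\pi$, arc $\langle P,Q\rangle$ for $P\ne Q$ whenever some arc of $G$ goes from $P$ to $Q$) is acyclic. For an $\mathcal{H}^{(\ast)}$-partition $\pi$ of $\mathcal{P}(\mathcal{G},e)$ and $v\in\mathbb{V}$, let $\pi|_{\mathcal{N}_v}=\{P\cap\mathcal{V}_v:P\in\pi,\ P\cap\mathcal{V}_v\ne\emptyset\}$; the gadget $\mathcal{N}_v$ is well-oriented in $\pi$ if $\pi|_{\mathcal{N}_v}=\mathcal{L}_v$ or $\pi|_{\mathcal{N}_v}=\mathcal{R}_v$. *)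

theory Defs
  imports Main "HOL-Library.Disjoint_Sets"
begin

text \<open>Vertices of the digraph P(G,e): gadget vertices v_{i,j} and arcs of G.\<close>
datatype 'v pvert = Gad 'v nat nat | ArcV "'v \<times> 'v"

definition has_ham_path :: "('a \<times> 'a) set \<Rightarrow> 'a set \<Rightarrow> bool" where
  "has_ham_path A S \<longleftrightarrow> (\<exists>xs. distinct xs \<and> set xs = S \<and>
      (\<forall>k. Suc k < length xs \<longrightarrow> (xs ! k, xs ! Suc k) \<in> A))"

definition quotient_arcs :: "('a \<times> 'a) set \<Rightarrow> 'a set set \<Rightarrow> ('a set \<times> 'a set) set" where
  "quotient_arcs A \<pi> = {(P, Q). P \<in> \<pi> \<and> Q \<in> \<pi> \<and> P \<noteq> Q \<and> (\<exists>x\<in>P. \<exists>y\<in>Q. (x, y) \<in> A)}"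

definition H_star_partition :: "'a set \<Rightarrow> ('a \<times> 'a) set \<Rightarrow> 'a set set \<Rightarrow> bool" where
  "H_star_partition Vs A \<pi> \<longleftrightarrow> partition_on Vs \<pi> \<and> (\<forall>P\<in>\<pi>. has_ham_path A P)
      \<and> acyclic (quotient_arcs A \<pi>)"

definition gadV :: "nat \<Rightarrow> 'v \<Rightarrow> 'v pvert set" where
  "gadV m v = {Gad v i j | i j. i \<le> m \<and> j \<le> m}"

definition gadE :: "nat \<Rightarrow> 'v \<Rightarrow> ('v pvert \<times> 'v pvert) set" where
  "gadE m v = {(Gad v i j, Gad v i (Suc j)) | i j. i \<le> m \<and> j < m}
            \<union> {(Gad v i j, Gad v (Suc i) j) | i j. i < m \<and> j \<le> m}"

definition gadL :: "nat \<Rightarrow> 'v \<Rightarrow> 'v pvert set set" where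
  "gadL m v = {{Gad v i j | j. j \<le> m} | i. i \<le> m}"

definition gadR :: "nat \<Rightarrow> 'v \<Rightarrow> 'v pvert set set" where
  "gadR m v = {{Gad v j i | j. j \<le> m} | i. i \<le> m}"

definition PV :: "'v set \<Rightarrow> ('v \<times> 'v) set \<Rightarrow> 'v pvert set" where
  "PV V E = (\<Union>v\<in>V. gadV (card E) v) \<union> ArcV ` E"

definition PA :: "'v set \<Rightarrow> ('v \<times> 'v) set \<Rightarrow> (('v \<times> 'v) \<Rightarrow> nat) \<Rightarrow> ('v pvert \<times> 'v pvert) set" where
  "PA V E e = (\<Union>v\<in>V. gadE (card E) v)
      \<union> {(ArcV (v, u), Gad v (e (v, u)) 0) | v u. (v, u) \<in> E}
      \<union> {(ArcV (v, u), Gad u 0 (e (v, u))) | v u. (v, u) \<in> E}"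

definition restr_gad :: "nat \<Rightarrow> 'v pvert set set \<Rightarrow> 'v \<Rightarrow> 'v pvert set set" where
  "restr_gad m \<pi> v = {P \<inter> gadV m v | P. P \<in> \<pi> \<and> P \<inter> gadV m v \<noteq> {}}"

definition well_oriented :: "nat \<Rightarrow> 'v pvert set set \<Rightarrow> 'v \<Rightarrow> bool" where
  "well_oriented m \<pi> v \<longleftrightarrow> restr_gad m \<pi> v = gadL m v \<or> restr_gad m \<pi> v = gadR m v"

definition std_graph :: "'v set \<Rightarrow> ('v \<times> 'v) set \<Rightarrow> (('v \<times> 'v) \<Rightarrow> nat) \<Rightarrow> bool" where
  "std_graph V E e \<longleftrightarrow> finite V \<and> V \<noteq> {} \<and> E \<subseteq> V \<times> V \<and> (\<forall>v. (v, v) \<notin> E)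
     \<and> (\<forall>v\<in>V. card {w. (w, v) \<in> E} = 1 \<or> card {w. (v, w) \<in> E} = 1)
     \<and> bij_betw e E {1..card E}"

end

theory Submission
  imports Defs
begin

text \<open>
  The blocks of \<pi> meeting the gadget cut out an
  H*-partition of the (m + 1) \<times> (m + 1) grid that is neither the rows nor the columns. Such a
  partition has at least m + 2 blocks: with at most m + 1 blocks, every block runs through exactly
  one vertex (k, m - k) of the anti-diagonal, the arcs between consecutive diagonal blocks all point
  the same way, and acyclicity of the quotient then forces the rows or the columns.

  Since an arc vertex has no incoming arcs and arcs leaving a gadget vertex stay in its gadget,
  each of these blocks lies inside the star of u (the gadget together with the arcs at u). If u has
  in-degree 1, the star is replaced by the m + 2 blocks "the arc entering u" and "row i preceded by
  the arc leaving u with label i", which are entered from outside only by earlier blocks. This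
  keeps an H*-partition, does not increase the number of blocks, orients the gadget of u along its
  rows and leaves every other gadget untouched. If u has out-degree 1 instead, transposing all
  gadgets and reversing G reduces to the first case.
\<close>

lemma partition_on_block_eq:
  "partition_on Vs \<pi> \<Longrightarrow> P \<in> \<pi> \<Longrightarrow> Q \<in> \<pi> \<Longrightarrow> x \<in> P \<Longrightarrow> x \<in> Q \<Longrightarrow> P = Q"
  using partition_onD2 disjointD by fastforce

lemma partition_on_block_subset: "partition_on Vs \<pi> \<Longrightarrow> P \<in> \<pi> \<Longrightarrow> P \<subseteq> Vs"
  using partition_onD1 by blast

lemma successively_upt:
  assumes "\<And>j. a \<le> j \<Longrightarrow> Suc j < b \<Longrightarrow> P j (Suc j)"
  shows "successively P [a..<b]"
  unfolding successively_conv_nth using assms by simp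

lemma has_ham_path_successively:
  "has_ham_path A S \<longleftrightarrow> (\<exists>xs. distinct xs \<and> set xs = S \<and> successively (\<lambda>x y. (x, y) \<in> A) xs)"
  unfolding has_ham_path_def successively_conv_nth by simp

lemma has_ham_path_singleton: "has_ham_path A {x}"
  unfolding has_ham_path_successively by (rule exI[of _ "[x]"]) simp

lemma has_ham_path_mono_on:
  assumes "has_ham_path A S" and "\<And>x y. x \<in> S \<Longrightarrow> y \<in> S \<Longrightarrow> (x, y) \<in> A \<Longrightarrow> (x, y) \<in> B"
  shows "has_ham_path B S"
  using assms unfolding has_ham_path_successively by (blast intro: successively_mono)

lemma has_ham_path_Cons:
  assumes "successively (\<lambda>x y. (x, y) \<in> A) xs" and "distinct xs" and "x \<notin> set xs"
    and "xs \<noteq> []" and "(x, hd xs) \<in> A"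
  shows "has_ham_path A (insert x (set xs))"
  unfolding has_ham_path_successively
  by (rule exI[of _ "x # xs"]) (use assms in \<open>simp add: successively_Cons\<close>)

lemma has_ham_path_inj_image:
  assumes "inj f" and "has_ham_path A S"
  shows "has_ham_path (map_prod f f ` A) (f ` S)"
proof -
  from assms(2) obtain xs where "distinct xs" "set xs = S" "successively (\<lambda>x y. (x, y) \<in> A) xs"
    unfolding has_ham_path_successively by blast
  then show ?thesis
    unfolding has_ham_path_successively using assms(1)
    by (intro exI[of _ "map f xs"])
      (auto simp: distinct_map successively_map inj_on_subset[OF assms(1)] elim: successively_mono)
qed

lemma quotient_arcsI:
  "P \<in> \<pi> \<Longrightarrow> Q \<in> \<pi> \<Longrightarrow> P \<noteq> Q \<Longrightarrow> x \<in> P \<Longrightarrow> y \<in> Q \<Longrightarrow> (x, y) \<in> A \<Longrightarrow> (P, Q) \<in> quotient_arcs A \<pi>"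
  unfolding quotient_arcs_def by blast

lemma quotient_arcsE:
  assumes "(P, Q) \<in> quotient_arcs A \<pi>"
  obtains x y where "P \<in> \<pi>" "Q \<in> \<pi>" "P \<noteq> Q" "x \<in> P" "y \<in> Q" "(x, y) \<in> A"
  using assms unfolding quotient_arcs_def by blast

lemma acyclic_hom:
  assumes "\<And>x y. (x, y) \<in> R \<Longrightarrow> (f x, f y) \<in> S" and "acyclic S"
  shows "acyclic R"
proof -
  have "(x, y) \<in> R\<^sup>+ \<Longrightarrow> (f x, f y) \<in> S\<^sup>+" for x y
    by (induction rule: trancl_induct) (auto intro: assms(1) trancl_into_trancl)
  then show ?thesis using assms(2) unfolding acyclic_def by blast
qed

lemma acyclic_rank_lex:
  fixes rk :: "'a \<Rightarrow> nat"
  assumes "\<And>x y. (x, y) \<in> R \<Longrightarrow> rk x < rk y \<or> (rk x = rk y \<and> (x, y) \<in> S)" and "acyclic S"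
  shows "acyclic R"
proof -
  have "(x, y) \<in> R\<^sup>+ \<Longrightarrow> rk x < rk y \<or> (rk x = rk y \<and> (x, y) \<in> S\<^sup>+)" for x y
  proof (induction rule: trancl_induct)
    case (step y z) then show ?case using assms(1)[of y z] by (auto intro: trancl_into_trancl)
  qed (use assms(1) in blast)
  then show ?thesis using assms(2) unfolding acyclic_def by blast
qed

lemma acyclic_path_forward:
  assumes "acyclic Q" and path: "\<And>k. k < n \<Longrightarrow> (p k, p (Suc k)) \<in> Q"
    and "j \<le> n" and "(p j, p i) \<in> Q"
  shows "j < i"
proof (rule ccontr)
  assume "\<not> j < i"
  then have "i \<le> j" by simp
  have "(p i, p j) \<in> Q\<^sup>*" using \<open>i \<le> j\<close> \<open>j \<le> n\<close>
  proof (induction j rule: dec_induct)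
    case (step k)
    then show ?case using path[of k] by (auto intro: rtrancl_into_rtrancl)
  qed simp
  then have "(p i, p i) \<in> Q\<^sup>+" using assms(4) by (rule rtrancl_into_trancl1)
  then show False using assms(1) unfolding acyclic_def by blast
qed

lemma acyclic_quotient_arcs_inj_image:
  assumes "inj f" and "acyclic (quotient_arcs A \<pi>)"
  shows "acyclic (quotient_arcs (map_prod f f ` A) ((`) f ` \<pi>))"
proof (rule acyclic_hom[OF _ assms(2), of _ "(-`) f"])
  fix Q1 Q2 assume "(Q1, Q2) \<in> quotient_arcs (map_prod f f ` A) ((`) f ` \<pi>)"
  then obtain x' y' where Q: "Q1 \<in> (`) f ` \<pi>" "Q2 \<in> (`) f ` \<pi>" "Q1 \<noteq> Q2"
    and "x' \<in> Q1" "y' \<in> Q2" "(x', y') \<in> map_prod f f ` A"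
    by (rule quotient_arcsE)
  then obtain x y where "x' \<in> Q1" "y' \<in> Q2" "(x, y) \<in> A" "x' = f x" "y' = f y" by blast
  then have xy: "f x \<in> Q1" "f y \<in> Q2" "(x, y) \<in> A" by simp_all
  obtain P1 P2 where P: "P1 \<in> \<pi>" "P2 \<in> \<pi>" "Q1 = f ` P1" "Q2 = f ` P2" using Q(1,2) by blast
  have "x \<in> P1" "y \<in> P2" using xy(1,2) P(3,4) assms(1) by (simp_all add: inj_image_mem_iff)
  moreover have "f -` Q1 = P1" "f -` Q2 = P2" using P(3,4) assms(1) by (simp_all add: inj_vimage_image_eq)
  moreover have "P1 \<noteq> P2" using P(3,4) Q(3) by blast
  ultimately show "(f -` Q1, f -` Q2) \<in> quotient_arcs A \<pi>"
    using P(1,2) xy(3) by (auto intro: quotient_arcsI)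
qed

lemma H_star_partition_inj_image:
  assumes "inj f" and "H_star_partition Vs A \<pi>"
  shows "H_star_partition (f ` Vs) (map_prod f f ` A) ((`) f ` \<pi>)"
proof -
  have part: "partition_on Vs \<pi>" and ham: "\<forall>P\<in>\<pi>. has_ham_path A P"
    and acy: "acyclic (quotient_arcs A \<pi>)"
    using assms(2) unfolding H_star_partition_def by auto
  have "(`) f ` \<pi> - {{}} = (`) f ` \<pi>" using partition_onD3[OF part] by auto
  then have "partition_on (f ` Vs) ((`) f ` \<pi>)"
    using partition_on_inj_image[OF part inj_on_subset[OF assms(1)]] by simp
  moreover have "\<forall>Q\<in>(`) f ` \<pi>. has_ham_path (map_prod f f ` A) Q"
    using ham has_ham_path_inj_image[OF assms(1)] by blast
  ultimately show ?thesis
    unfolding H_star_partition_def using acyclic_quotient_arcs_inj_image[OF assms(1) acy] by blast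
qed

lemma acyclic_quotient_arcs_shrink:
  assumes acy: "acyclic (quotient_arcs A \<pi>)" and "B \<subseteq> A" and shrink: "\<And>P. h P \<subseteq> P"
  shows "acyclic (quotient_arcs B (h ` \<pi> - {{}}))"
proof -
  define g where "g Q = (SOME P. P \<in> \<pi> \<and> Q = h P)" for Q
  have g: "g Q \<in> \<pi> \<and> Q = h (g Q)" if "Q \<in> h ` \<pi>" for Q
  proof -
    have "\<exists>P. P \<in> \<pi> \<and> Q = h P" using that by blast
    then show ?thesis unfolding g_def by (rule someI_ex)
  qed
  show ?thesis
  proof (rule acyclic_hom[OF _ acy, of _ g])
    fix Q1 Q2 assume "(Q1, Q2) \<in> quotient_arcs B (h ` \<pi> - {{}})"
    then obtain x y where "Q1 \<in> h ` \<pi> - {{}}" "Q2 \<in> h ` \<pi> - {{}}" "Q1 \<noteq> Q2"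
      and xy: "x \<in> Q1" "y \<in> Q2" "(x, y) \<in> B"
      by (rule quotient_arcsE)
    then have Q: "Q1 \<in> h ` \<pi>" "Q2 \<in> h ` \<pi>" "Q1 \<noteq> Q2" by simp_all
    have "g Q1 \<noteq> g Q2" using g[OF Q(1)] g[OF Q(2)] Q(3) by metis
    moreover have "x \<in> g Q1" "y \<in> g Q2" using g[OF Q(1)] g[OF Q(2)] xy(1,2) shrink by blast+
    ultimately show "(g Q1, g Q2) \<in> quotient_arcs A \<pi>"
      using g[OF Q(1)] g[OF Q(2)] xy(3) \<open>B \<subseteq> A\<close> by (blast intro: quotient_arcsI)
  qed
qed

section \<open>Replacing blocks\<close>

definition replace_blocks :: "'a set \<Rightarrow> (nat \<Rightarrow> 'a set) \<Rightarrow> nat \<Rightarrow> 'a set set \<Rightarrow> 'a set set" where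
  "replace_blocks X T n \<pi> = ((\<lambda>P. P - X) ` \<pi> - {{}}) \<union> T ` {..<n}"

lemma mem_replace_blocks:
  "Q \<in> replace_blocks X T n \<pi> \<longleftrightarrow> (\<exists>P\<in>\<pi>. Q = P - X \<and> Q \<noteq> {}) \<or> (\<exists>i<n. Q = T i)"
  unfolding replace_blocks_def by auto

lemma card_replace_blocks_le:
  assumes "finite \<pi>" and "n \<le> card {P \<in> \<pi>. P \<subseteq> X}"
  shows "card (replace_blocks X T n \<pi>) \<le> card \<pi>"
proof -
  let ?R = "(\<lambda>P. P - X) ` \<pi> - {{}}"
  have "?R = (\<lambda>P. P - X) ` {P \<in> \<pi>. \<not> P \<subseteq> X}" by blast
  then have "card ?R \<le> card {P \<in> \<pi>. \<not> P \<subseteq> X}"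
    using assms(1) by (simp add: card_image_le)
  moreover have "card (T ` {..<n}) \<le> n" using card_image_le[of "{..<n}" T] by simp
  moreover have "card \<pi> = card {P \<in> \<pi>. P \<subseteq> X} + card {P \<in> \<pi>. \<not> P \<subseteq> X}"
    using assms(1) by (subst card_Un_disjoint[symmetric]) (auto intro: arg_cong[where f = card])
  ultimately show ?thesis
    unfolding replace_blocks_def using assms(2) card_Un_le[of ?R "T ` {..<n}"] by linarith
qed

lemma partition_on_replace_blocks:
  assumes part: "partition_on Vs \<pi>" and X: "X \<subseteq> Vs" "X = (\<Union>i<n. T i)"
    and T_ne: "\<And>i. i < n \<Longrightarrow> T i \<noteq> {}"
    and T_disj: "\<And>i j. i < n \<Longrightarrow> j < n \<Longrightarrow> i \<noteq> j \<Longrightarrow> T i \<inter> T j = {}"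
  shows "partition_on Vs (replace_blocks X T n \<pi>)"
proof (rule partition_onI)
  have "\<Union>((\<lambda>P. P - X) ` \<pi> - {{}}) = Vs - X" using partition_onD1[OF part] by auto
  then show "\<Union>(replace_blocks X T n \<pi>) = Vs" unfolding replace_blocks_def using X by auto
  show "{} \<notin> replace_blocks X T n \<pi>" unfolding replace_blocks_def using T_ne by blast
  have R_disj: "disjnt (P - X) (Q - X)" if "P \<in> \<pi>" "Q \<in> \<pi>" "P - X \<noteq> Q - X" for P Q
    using partition_on_block_eq[OF part that(1,2)] that(3) unfolding disjnt_def by blast
  have T_disj': "disjnt (T i) (T j)" if "i < n" "j < n" "T i \<noteq> T j" for i j
    using T_disj[OF that(1,2)] that(3) unfolding disjnt_def by blast
  have RT_disj: "disjnt (P - X) (T i)" if "i < n" for P i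
    using that unfolding disjnt_def X(2) by blast
  fix P Q assume "P \<in> replace_blocks X T n \<pi>" "Q \<in> replace_blocks X T n \<pi>" "P \<noteq> Q"
  then show "disjnt P Q"
    unfolding mem_replace_blocks using R_disj T_disj' RT_disj disjnt_sym by metis
qed

lemma quotient_arcs_replace_blocks_into_block:
  assumes part': "partition_on Vs (replace_blocks X T n \<pi>)" and "i < n"
    and T_pred: "\<And>i x y. i < n \<Longrightarrow> (x, y) \<in> A \<Longrightarrow> y \<in> T i \<Longrightarrow> x \<notin> T i \<Longrightarrow> \<exists>j<i. x \<in> T j"
    and arc: "(Q, T i) \<in> quotient_arcs A (replace_blocks X T n \<pi>)"
  shows "\<exists>j<i. Q = T j"
proof -
  from arc obtain x y where Q: "Q \<in> replace_blocks X T n \<pi>" "T i \<in> replace_blocks X T n \<pi>" "Q \<noteq> T i"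
    and xy: "x \<in> Q" "y \<in> T i" "(x, y) \<in> A"
    by (rule quotient_arcsE)
  have "x \<notin> T i" using disjointD[OF partition_onD2[OF part'] Q] xy(1) by blast
  then obtain j where "j < i" "x \<in> T j" using T_pred \<open>i < n\<close> xy by blast
  moreover have "T j \<in> replace_blocks X T n \<pi>"
    using \<open>j < i\<close> \<open>i < n\<close> unfolding mem_replace_blocks by (intro disjI2 exI[of _ j]) simp
  ultimately have "T j = Q" using partition_on_block_eq[OF part' _ Q(1) _ xy(1)] by blast
  then show ?thesis using \<open>j < i\<close> by blast
qed

text \<open>Ranking the new blocks by their index and all remaining blocks after them, every arc of the new
  quotient either increases the rank or is an arc of the old quotient between remaining blocks.\<close>
lemma acyclic_quotient_replace_blocks:
  assumes acy: "acyclic (quotient_arcs A \<pi>)"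
    and part': "partition_on Vs (replace_blocks X T n \<pi>)" and X: "X = (\<Union>i<n. T i)"
    and T_ne: "\<And>i. i < n \<Longrightarrow> T i \<noteq> {}"
    and T_disj: "\<And>i j. i < n \<Longrightarrow> j < n \<Longrightarrow> i \<noteq> j \<Longrightarrow> T i \<inter> T j = {}"
    and T_pred: "\<And>i x y. i < n \<Longrightarrow> (x, y) \<in> A \<Longrightarrow> y \<in> T i \<Longrightarrow> x \<notin> T i \<Longrightarrow> \<exists>j<i. x \<in> T j"
  shows "acyclic (quotient_arcs A (replace_blocks X T n \<pi>))"
proof -
  let ?R = "(\<lambda>P. P - X) ` \<pi> - {{}}"
  define rk where "rk Q = (if \<exists>i<n. Q = T i then THE i. i < n \<and> Q = T i else n)" for Q
  have rk_T: "rk (T i) = i" if "i < n" for i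
  proof -
    have "(THE j. j < n \<and> T i = T j) = i" using that T_ne T_disj by (intro the_equality) blast+
    then show ?thesis unfolding rk_def using that by auto
  qed
  have rk_R: "rk Q = n" if "Q \<in> ?R" for Q
  proof -
    have "Q \<noteq> {}" "Q \<inter> X = {}" using that by auto
    then have "\<not> (\<exists>i<n. Q = T i)" unfolding X by blast
    then show ?thesis unfolding rk_def by (rule if_not_P)
  qed
  show ?thesis
  proof (rule acyclic_rank_lex[of _ rk "quotient_arcs A ?R"])
    show "acyclic (quotient_arcs A ?R)" by (rule acyclic_quotient_arcs_shrink[OF acy]) auto
    fix Q1 Q2 assume arc: "(Q1, Q2) \<in> quotient_arcs A (replace_blocks X T n \<pi>)"
    then obtain x y where Q: "Q1 \<in> replace_blocks X T n \<pi>" "Q2 \<in> replace_blocks X T n \<pi>" "Q1 \<noteq> Q2"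
      and xy: "x \<in> Q1" "y \<in> Q2" "(x, y) \<in> A"
      by (rule quotient_arcsE)
    consider "Q1 \<in> ?R" "Q2 \<in> ?R" | j where "j < n" "Q1 = T j" "Q2 \<in> ?R" | i where "i < n" "Q2 = T i"
      using Q(1,2) unfolding replace_blocks_def by blast
    then show "rk Q1 < rk Q2 \<or> rk Q1 = rk Q2 \<and> (Q1, Q2) \<in> quotient_arcs A ?R"
    proof cases
      case 1
      then have "rk Q1 = rk Q2 \<and> (Q1, Q2) \<in> quotient_arcs A ?R"
        using rk_R[OF 1(1)] rk_R[OF 1(2)] Q(3) xy by (auto intro: quotient_arcsI)
      then show ?thesis by (rule disjI2)
    next
      case 2
      then have "rk Q1 < rk Q2" using rk_T[OF 2(1)] rk_R[OF 2(3)] by simp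
      then show ?thesis by (rule disjI1)
    next
      case 3
      have "\<exists>j<i. Q1 = T j"
        by (rule quotient_arcs_replace_blocks_into_block[OF part' 3(1) _ arc[unfolded 3(2)]]) (fact T_pred)
      then obtain j where "j < i" "Q1 = T j" by blast
      then have "rk Q1 < rk Q2" using rk_T[OF 3(1)] rk_T[of j] 3 by simp
      then show ?thesis by (rule disjI1)
    qed
  qed
qed

lemma H_star_partition_replace_blocks:
  assumes H: "H_star_partition Vs A \<pi>"
    and X: "X \<subseteq> Vs" "X = (\<Union>i<n. T i)"
    and T_ne: "\<And>i. i < n \<Longrightarrow> T i \<noteq> {}"
    and T_disj: "\<And>i j. i < n \<Longrightarrow> j < n \<Longrightarrow> i \<noteq> j \<Longrightarrow> T i \<inter> T j = {}"
    and T_ham: "\<And>i. i < n \<Longrightarrow> has_ham_path A (T i)"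
    and T_pred: "\<And>i x y. i < n \<Longrightarrow> (x, y) \<in> A \<Longrightarrow> y \<in> T i \<Longrightarrow> x \<notin> T i \<Longrightarrow> \<exists>j<i. x \<in> T j"
    and rest_ham: "\<And>P. P \<in> \<pi> \<Longrightarrow> P - X \<noteq> {} \<Longrightarrow> has_ham_path A (P - X)"
  shows "H_star_partition Vs A (replace_blocks X T n \<pi>)"
proof -
  have part: "partition_on Vs \<pi>" and acy: "acyclic (quotient_arcs A \<pi>)"
    using H unfolding H_star_partition_def by auto
  have part': "partition_on Vs (replace_blocks X T n \<pi>)"
    by (rule partition_on_replace_blocks[OF part X T_ne T_disj])
  moreover have "\<forall>Q\<in>replace_blocks X T n \<pi>. has_ham_path A Q"
    using T_ham rest_ham unfolding Ball_def mem_replace_blocks by blast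
  moreover have "acyclic (quotient_arcs A (replace_blocks X T n \<pi>))"
    by (rule acyclic_quotient_replace_blocks[OF acy part' X(2)]) (use T_ne T_disj T_pred in auto)
  ultimately show ?thesis unfolding H_star_partition_def by blast
qed

section \<open>The grid gadget\<close>

fun row :: "'v pvert \<Rightarrow> nat" where
  "row (Gad v i j) = i"
| "row (ArcV a) = 0"

fun col :: "'v pvert \<Rightarrow> nat" where
  "col (Gad v i j) = j"
| "col (ArcV a) = 0"

definition level :: "'v pvert \<Rightarrow> nat" where
  "level x = row x + col x"

lemma Gad_in_gadV [simp]: "Gad v i j \<in> gadV m u \<longleftrightarrow> v = u \<and> i \<le> m \<and> j \<le> m"
  unfolding gadV_def by auto

lemma ArcV_notin_gadV [simp]: "ArcV a \<notin> gadV m u"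
  unfolding gadV_def by auto

lemma gadV_elem: "x \<in> gadV m u \<Longrightarrow> x = Gad u (row x) (col x) \<and> row x \<le> m \<and> col x \<le> m"
  unfolding gadV_def by auto

lemma gadV_disjoint: "v \<noteq> w \<Longrightarrow> gadV m v \<inter> gadV m w = {}"
  unfolding gadV_def by auto

lemma finite_gadV: "finite (gadV m u)"
proof -
  have "gadV m u = (\<lambda>(i, j). Gad u i j) ` ({..m} \<times> {..m})" unfolding gadV_def by auto
  then show ?thesis by simp
qed

lemma gadE_iff:
  "(x, y) \<in> gadE m u \<longleftrightarrow> (\<exists>i j. x = Gad u i j \<and>
     (i \<le> m \<and> j < m \<and> y = Gad u i (Suc j) \<or> i < m \<and> j \<le> m \<and> y = Gad u (Suc i) j))"
  unfolding gadE_def by blast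

lemma gadE_right: "i \<le> m \<Longrightarrow> j < m \<Longrightarrow> (Gad u i j, Gad u i (Suc j)) \<in> gadE m u"
  unfolding gadE_iff by blast

lemma gadE_down: "i < m \<Longrightarrow> j \<le> m \<Longrightarrow> (Gad u i j, Gad u (Suc i) j) \<in> gadE m u"
  unfolding gadE_iff by blast

lemma gadE_in_gadV: "(x, y) \<in> gadE m u \<Longrightarrow> x \<in> gadV m u \<and> y \<in> gadV m u"
  unfolding gadE_iff by auto

lemma gadE_level:
  "(x, y) \<in> gadE m u \<Longrightarrow> level y = Suc (level x) \<and> row x \<le> row y \<and> col x \<le> col y"
  unfolding gadE_iff level_def by auto

lemma gadE_path_monotone:
  assumes path: "successively (\<lambda>x y. (x, y) \<in> gadE m u) xs" and "a \<le> b" "b < length xs"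
  shows "level (xs ! b) = level (xs ! a) + (b - a) \<and> row (xs ! a) \<le> row (xs ! b) \<and> col (xs ! a) \<le> col (xs ! b)"
  using assms(2,3)
proof (induction b rule: dec_induct)
  case (step k)
  then have "(xs ! k, xs ! Suc k) \<in> gadE m u" using successively_nth[OF path] by simp
  from gadE_level[OF this] show ?case using step by auto
qed simp

lemma gadL_eq_image: "gadL m u = (\<lambda>i. (\<lambda>j. Gad u i j) ` {..m}) ` {..m}"
  unfolding gadL_def atMost_def by (simp add: setcompr_eq_image)

lemma gadR_eq_image: "gadR m u = (\<lambda>i. (\<lambda>j. Gad u j i) ` {..m}) ` {..m}"
  unfolding gadR_def atMost_def by (simp add: setcompr_eq_image)

lemma grid_index_eq_row:
  fixes f :: "nat \<Rightarrow> nat \<Rightarrow> nat"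
  assumes mono: "\<And>r c. r \<le> m \<Longrightarrow> c < m \<Longrightarrow> f r c \<le> f r (Suc c)"
    and on_diag: "\<And>k. k \<le> m \<Longrightarrow> f k (m - k) = k"
    and above: "\<And>r c. r \<le> m \<Longrightarrow> c \<le> m \<Longrightarrow> m \<le> r + c \<Longrightarrow> f r c \<le> r"
    and below: "\<And>r c. r \<le> m \<Longrightarrow> c \<le> m \<Longrightarrow> r + c \<le> m \<Longrightarrow> r \<le> f r c"
    and rc: "r \<le> m" "c \<le> m"
  shows "f r c = r"
proof -
  have le: "f r c' \<le> f r c''" if "c' \<le> c''" "c'' \<le> m" for c' c''
  proof (rule lift_Suc_mono_le_ivl[of "{..<m}" "f r"])
    show "\<And>n. n \<in> {..<m} \<Longrightarrow> f r n \<le> f r (Suc n)" using mono rc(1) by blast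
  qed (use that in auto)
  show ?thesis
  proof (cases "m \<le> r + c")
    case True
    then have "f r (m - r) \<le> f r c" using le rc by simp
    then show ?thesis using above[OF rc True] on_diag[OF rc(1)] by simp
  next
    case False
    then have "f r c \<le> f r (m - r)" using le rc by simp
    then show ?thesis using below[OF rc] False on_diag[OF rc(1)] by simp
  qed
qed

section \<open>H*-partitions of the grid with at most m + 1 blocks\<close>

locale grid_partition =
  fixes m :: nat and u :: 'v and \<sigma> :: "'v pvert set set"
  assumes H_star: "H_star_partition (gadV m u) (gadE m u) \<sigma>"
    and card_le: "card \<sigma> \<le> Suc m"
begin

abbreviation Q where "Q \<equiv> quotient_arcs (gadE m u) \<sigma>"

lemma part: "partition_on (gadV m u) \<sigma>"
  and acyclic_Q: "acyclic Q"
  using H_star unfolding H_star_partition_def by auto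

lemma block_monotone:
  assumes P: "P \<in> \<sigma>" and "x \<in> P" "y \<in> P" "level x \<le> level y"
  shows "row x \<le> row y \<and> col x \<le> col y \<and> (level y = Suc (level x) \<longrightarrow> (x, y) \<in> gadE m u)
    \<and> (level x = level y \<longrightarrow> x = y)"
proof -
  obtain xs where "distinct xs" and set: "set xs = P" and path: "successively (\<lambda>x y. (x, y) \<in> gadE m u) xs"
    using H_star P unfolding H_star_partition_def has_ham_path_successively by blast
  obtain a b where a: "a < length xs" "x = xs ! a" and b: "b < length xs" "y = xs ! b"
    using assms(2,3) set by (metis in_set_conv_nth)
  have "a \<le> b"
  proof (rule ccontr)
    assume "\<not> a \<le> b"
    then have "level x = level y + (a - b)" using gadE_path_monotone[OF path, of b a] a b by simp
    then show False using assms(4) \<open>\<not> a \<le> b\<close> by simp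
  qed
  note mono = gadE_path_monotone[OF path \<open>a \<le> b\<close> b(1), folded a(2) b(2)]
  have "(x, y) \<in> gadE m u" if "level y = Suc (level x)"
  proof -
    have "b = Suc a" using that mono \<open>a \<le> b\<close> by simp
    then show ?thesis using successively_nth[OF path, of a] a b by simp
  qed
  moreover have "x = y" if "level x = level y"
  proof -
    have "b = a" using that mono \<open>a \<le> b\<close> by simp
    then show ?thesis using a b by simp
  qed
  ultimately show ?thesis using mono by blast
qed

lemma block_coords_mono:
  "P \<in> \<sigma> \<Longrightarrow> x \<in> P \<Longrightarrow> y \<in> P \<Longrightarrow> level x \<le> level y \<Longrightarrow> row x \<le> row y \<and> col x \<le> col y"
  using block_monotone by blast

lemma block_level_inj: "P \<in> \<sigma> \<Longrightarrow> x \<in> P \<Longrightarrow> y \<in> P \<Longrightarrow> level x = level y \<Longrightarrow> x = y"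
  using block_monotone[of P x y] by simp

lemma block_level_Suc:
  "P \<in> \<sigma> \<Longrightarrow> x \<in> P \<Longrightarrow> y \<in> P \<Longrightarrow> level y = Suc (level x) \<Longrightarrow> (x, y) \<in> gadE m u"
  using block_monotone[of P x y] by simp

definition block_of :: "'v pvert \<Rightarrow> 'v pvert set" where
  "block_of x = (THE P. P \<in> \<sigma> \<and> x \<in> P)"

lemma block_of_eq: "P \<in> \<sigma> \<Longrightarrow> x \<in> P \<Longrightarrow> block_of x = P"
  unfolding block_of_def by (rule the_equality) (simp, metis partition_on_block_eq[OF part])

lemma block_of: "x \<in> gadV m u \<Longrightarrow> block_of x \<in> \<sigma> \<and> x \<in> block_of x"
  using partition_onD1[OF part] block_of_eq by blast

text \<open>A block meets every level at most once, so the m + 1 vertices (k, m - k) of level m lie in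
  distinct blocks; as there are at most m + 1 blocks, these diagonal blocks are all of them.\<close>
definition diag_block :: "nat \<Rightarrow> 'v pvert set" where
  "diag_block k = block_of (Gad u k (m - k))"

lemma diag_block: "k \<le> m \<Longrightarrow> diag_block k \<in> \<sigma> \<and> Gad u k (m - k) \<in> diag_block k"
  unfolding diag_block_def by (rule block_of) simp

lemma diag_block_inj: "k \<le> m \<Longrightarrow> l \<le> m \<Longrightarrow> diag_block k = diag_block l \<Longrightarrow> k = l"
  using block_level_inj[of "diag_block k" "Gad u k (m - k)" "Gad u l (m - l)"] diag_block[of k] diag_block[of l]
  by (auto simp: level_def)

lemma sigma_eq_diag_blocks: "\<sigma> = diag_block ` {..m}"
proof -
  have sub: "diag_block ` {..m} \<subseteq> \<sigma>" using diag_block by auto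
  have "inj_on diag_block {..m}" using diag_block_inj by (auto simp: inj_on_def)
  then have "card (diag_block ` {..m}) = Suc m" by (simp add: card_image)
  moreover have "finite \<sigma>" using finite_elements[OF finite_gadV part] .
  ultimately show ?thesis using card_subset_eq[OF _ sub] card_mono[OF _ sub] card_le by force
qed

definition diag_index :: "'v pvert \<Rightarrow> nat" where
  "diag_index x = (THE k. k \<le> m \<and> x \<in> diag_block k)"

lemma diag_index_eq: "k \<le> m \<Longrightarrow> x \<in> diag_block k \<Longrightarrow> diag_index x = k"
  unfolding diag_index_def using partition_on_block_eq[OF part] diag_block diag_block_inj by (intro the_equality) metis+

lemma diag_index: "x \<in> gadV m u \<Longrightarrow> diag_index x \<le> m \<and> x \<in> diag_block (diag_index x)"
proof -
  assume "x \<in> gadV m u"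
  then obtain k where "k \<le> m" "x \<in> diag_block k" using block_of[of x] sigma_eq_diag_blocks by auto
  then show ?thesis using diag_index_eq by simp
qed

lemma diag_block_eq_level_set: "k \<le> m \<Longrightarrow> diag_block k = {x \<in> gadV m u. diag_index x = k}"
  using diag_index_eq diag_index diag_block partition_on_block_subset[OF part] by blast

lemma diag_block_arc:
  "k \<le> m \<Longrightarrow> l \<le> m \<Longrightarrow> k \<noteq> l \<Longrightarrow> x \<in> diag_block k \<Longrightarrow> y \<in> diag_block l \<Longrightarrow> (x, y) \<in> gadE m u
    \<Longrightarrow> (diag_block k, diag_block l) \<in> Q"
  using diag_block diag_block_inj by (blast intro: quotient_arcsI)

lemma diag_index_above:
  assumes "r \<le> m" "c \<le> m" "m \<le> r + c"
  shows "diag_index (Gad u r c) \<le> r \<and> m - diag_index (Gad u r c) \<le> c"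
  using block_coords_mono[of "diag_block (diag_index (Gad u r c))" "Gad u _ (m - _)" "Gad u r c"] diag_index[of "Gad u r c"]
    diag_block[of "diag_index (Gad u r c)"] assms by (auto simp: level_def)

lemma diag_index_below:
  assumes "r \<le> m" "c \<le> m" "r + c \<le> m"
  shows "r \<le> diag_index (Gad u r c) \<and> c \<le> m - diag_index (Gad u r c)"
  using block_coords_mono[of "diag_block (diag_index (Gad u r c))" "Gad u r c" "Gad u _ (m - _)"] diag_index[of "Gad u r c"]
    diag_block[of "diag_index (Gad u r c)"] assms by (auto simp: level_def)

lemma pre_diag_cases:
  assumes "k < m"
  shows "Gad u k (m - Suc k) \<in> diag_block k \<or> Gad u k (m - Suc k) \<in> diag_block (Suc k)"
proof -
  let ?a = "Gad u k (m - Suc k)" let ?l = "diag_index ?a"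
  have a: "?l \<le> m" "?a \<in> diag_block ?l" using diag_index[of ?a] assms by auto
  have "(?a, Gad u ?l (m - ?l)) \<in> gadE m u"
    using block_level_Suc[OF _ a(2), of "Gad u ?l (m - ?l)"] diag_block[OF a(1)] assms a(1)
    by (simp add: level_def)
  then have "?l = k \<or> ?l = Suc k" using assms unfolding gadE_iff by auto
  then show ?thesis using a(2) by auto
qed

lemma post_diag_cases:
  assumes "k < m"
  shows "Gad u (Suc k) (m - k) \<in> diag_block k \<or> Gad u (Suc k) (m - k) \<in> diag_block (Suc k)"
proof -
  let ?b = "Gad u (Suc k) (m - k)" let ?l = "diag_index ?b"
  have b: "?l \<le> m" "?b \<in> diag_block ?l" using diag_index[of ?b] assms by auto
  have "(Gad u ?l (m - ?l), ?b) \<in> gadE m u"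
    using block_level_Suc[OF _ _ b(2), of "Gad u ?l (m - ?l)"] diag_block[OF b(1)] assms b(1)
    by (simp add: level_def)
  then have "?l = k \<or> ?l = Suc k" using assms unfolding gadE_iff by auto
  then show ?thesis using b(2) by auto
qed

lemma not_forward_and_backward: "(diag_block k, diag_block (Suc k)) \<in> Q \<Longrightarrow> (diag_block (Suc k), diag_block k) \<notin> Q"
  using acyclic_Q unfolding acyclic_def by (meson r_into_trancl trancl_trans)

lemma forward_iff_pre_diag:
  assumes "k < m"
  shows "(diag_block k, diag_block (Suc k)) \<in> Q \<longleftrightarrow> Gad u k (m - Suc k) \<in> diag_block k"
proof
  have up: "Gad u (Suc k) (m - Suc k) \<in> diag_block (Suc k)" using diag_block[of "Suc k"] assms by simp
  assume "Gad u k (m - Suc k) \<in> diag_block k"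
  then show "(diag_block k, diag_block (Suc k)) \<in> Q"
    using diag_block_arc[OF _ _ _ _ up gadE_down] assms by simp
next
  have "Suc (m - Suc k) = m - k" using assms by simp
  then have arc: "(Gad u k (m - Suc k), Gad u k (m - k)) \<in> gadE m u"
    using gadE_right[of k m "m - Suc k" u] assms by simp
  assume "(diag_block k, diag_block (Suc k)) \<in> Q"
  then have "(diag_block (Suc k), diag_block k) \<notin> Q" by (rule not_forward_and_backward)
  then show "Gad u k (m - Suc k) \<in> diag_block k"
    using pre_diag_cases[OF assms] diag_block_arc[OF _ _ _ _ _ arc, of "Suc k" k] diag_block[of k] assms by auto
qed

lemma forward_iff_post_diag:
  assumes "k < m"
  shows "(diag_block k, diag_block (Suc k)) \<in> Q \<longleftrightarrow> Gad u (Suc k) (m - k) \<in> diag_block (Suc k)"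
proof
  have down: "Gad u k (m - k) \<in> diag_block k" using diag_block[of k] assms by simp
  assume "Gad u (Suc k) (m - k) \<in> diag_block (Suc k)"
  then show "(diag_block k, diag_block (Suc k)) \<in> Q"
    using diag_block_arc[OF _ _ _ down _ gadE_down] assms by simp
next
  have "Suc (m - Suc k) = m - k" using assms by simp
  then have arc: "(Gad u (Suc k) (m - Suc k), Gad u (Suc k) (m - k)) \<in> gadE m u"
    using gadE_right[of "Suc k" m "m - Suc k" u] assms by simp
  assume "(diag_block k, diag_block (Suc k)) \<in> Q"
  then have "(diag_block (Suc k), diag_block k) \<notin> Q" by (rule not_forward_and_backward)
  then show "Gad u (Suc k) (m - k) \<in> diag_block (Suc k)"
    using post_diag_cases[OF assms] diag_block_arc[OF _ _ _ _ _ arc, of "Suc k" k] diag_block[of "Suc k"] assms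
    by auto
qed

lemma forward_Suc_iff:
  assumes "Suc k < m"
  shows "(diag_block (Suc k), diag_block (Suc (Suc k))) \<in> Q \<longleftrightarrow> (diag_block k, diag_block (Suc k)) \<in> Q"
proof
  assume fw: "(diag_block (Suc k), diag_block (Suc (Suc k))) \<in> Q"
  show "(diag_block k, diag_block (Suc k)) \<in> Q"
  proof (rule ccontr)
    assume "(diag_block k, diag_block (Suc k)) \<notin> Q"
    then have "Gad u k (m - Suc k) \<in> diag_block (Suc k)"
      using forward_iff_pre_diag[of k] pre_diag_cases[of k] assms by auto
    moreover have "Gad u (Suc k) (m - Suc (Suc k)) \<in> diag_block (Suc k)"
      using forward_iff_pre_diag[of "Suc k"] fw assms by simp
    moreover have "level (Gad u k (m - Suc k)) = level (Gad u (Suc k) (m - Suc (Suc k)))"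
      using assms by (simp add: level_def)
    ultimately show False
      using block_level_inj[of "diag_block (Suc k)" "Gad u k (m - Suc k)" "Gad u (Suc k) (m - Suc (Suc k))"]
        diag_block[of "Suc k"] assms by auto
  qed
next
  assume fw: "(diag_block k, diag_block (Suc k)) \<in> Q"
  show "(diag_block (Suc k), diag_block (Suc (Suc k))) \<in> Q"
  proof (rule ccontr)
    assume "(diag_block (Suc k), diag_block (Suc (Suc k))) \<notin> Q"
    then have "Gad u (Suc (Suc k)) (m - Suc k) \<in> diag_block (Suc k)"
      using forward_iff_post_diag[of "Suc k"] post_diag_cases[of "Suc k"] assms by auto
    moreover have "Gad u (Suc k) (m - k) \<in> diag_block (Suc k)"
      using forward_iff_post_diag[of k] fw assms by simp
    moreover have "level (Gad u (Suc (Suc k)) (m - Suc k)) = level (Gad u (Suc k) (m - k))"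
      using assms by (simp add: level_def)
    ultimately show False
      using block_level_inj[of "diag_block (Suc k)" "Gad u (Suc (Suc k)) (m - Suc k)" "Gad u (Suc k) (m - k)"]
        diag_block[of "Suc k"] assms by auto
  qed
qed

lemma backward_if_not_forward:
  assumes "k < m" and "(diag_block k, diag_block (Suc k)) \<notin> Q"
  shows "(diag_block (Suc k), diag_block k) \<in> Q"
proof -
  have "Suc (m - Suc k) = m - k" using assms by simp
  then have arc: "(Gad u k (m - Suc k), Gad u k (m - k)) \<in> gadE m u"
    using gadE_right[of k m "m - Suc k" u] assms by simp
  have "Gad u k (m - Suc k) \<in> diag_block (Suc k)"
    using forward_iff_pre_diag[of k] pre_diag_cases[of k] assms by auto
  then show ?thesis using diag_block_arc[OF _ _ _ _ _ arc, of "Suc k" k] diag_block[of k] assms by simp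
qed

lemma orientation_uniform:
  "(\<forall>k<m. (diag_block k, diag_block (Suc k)) \<in> Q) \<or> (\<forall>k<m. (diag_block (Suc k), diag_block k) \<in> Q)"
proof -
  have same: "(diag_block k, diag_block (Suc k)) \<in> Q \<longleftrightarrow> (diag_block 0, diag_block (Suc 0)) \<in> Q" if "k < m" for k
    using that by (induction k) (simp_all add: forward_Suc_iff)
  show ?thesis using same backward_if_not_forward by blast
qed

lemma diag_index_arc:
  assumes "(x, y) \<in> gadE m u" and "diag_index x \<noteq> diag_index y"
  shows "(diag_block (diag_index x), diag_block (diag_index y)) \<in> Q"
  using diag_block_arc[OF _ _ assms(2) _ _ assms(1)] diag_index gadE_in_gadV[OF assms(1)] by blast

lemma rows_if_forward:
  assumes fw: "\<forall>k<m. (diag_block k, diag_block (Suc k)) \<in> Q"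
  shows "\<sigma> = gadL m u"
proof -
  have index_row: "diag_index (Gad u r c) = r" if "r \<le> m" "c \<le> m" for r c
  proof (rule grid_index_eq_row[where f = "\<lambda>r c. diag_index (Gad u r c)"])
    show "diag_index (Gad u r c) \<le> diag_index (Gad u r (Suc c))" if "r \<le> m" "c < m" for r c
      using acyclic_path_forward[OF acyclic_Q, of m diag_block] fw diag_index_arc[OF gadE_right[OF that]]
        diag_index[of "Gad u r c"] that by fastforce
    show "diag_index (Gad u k (m - k)) = k" if "k \<le> m" for k using diag_index_eq diag_block that by blast
  qed (use diag_index_above diag_index_below that in auto)
  have "diag_block k = (\<lambda>j. Gad u k j) ` {..m}" if "k \<le> m" for k
  proof (intro equalityI subsetI)
    fix x assume "x \<in> diag_block k"
    then have "x \<in> gadV m u" "diag_index x = k" using diag_block_eq_level_set[OF that] by auto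
    then show "x \<in> (\<lambda>j. Gad u k j) ` {..m}" using gadV_elem[of x] index_row by (metis atMost_iff image_eqI)
  next
    fix x assume "x \<in> (\<lambda>j. Gad u k j) ` {..m}"
    then obtain j where "j \<le> m" "x = Gad u k j" by auto
    then show "x \<in> diag_block k" using diag_block_eq_level_set[OF that] index_row that by simp
  qed
  then have "diag_block ` {..m} = gadL m u" unfolding gadL_eq_image by (intro image_cong) auto
  with sigma_eq_diag_blocks show ?thesis by (rule trans)
qed

lemma cols_if_backward:
  assumes bw: "\<forall>k<m. (diag_block (Suc k), diag_block k) \<in> Q"
  shows "\<sigma> = gadR m u"
proof -
  have index_col: "m - diag_index (Gad u c r) = r" if "r \<le> m" "c \<le> m" for r c
  proof (rule grid_index_eq_row[where f = "\<lambda>r c. m - diag_index (Gad u c r)"])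
    show "m - diag_index (Gad u c r) \<le> m - diag_index (Gad u (Suc c) r)" if "r \<le> m" "c < m" for r c
      using acyclic_path_forward[of "Q\<inverse>" m diag_block] acyclic_Q bw diag_index_arc[OF gadE_down[OF that(2,1)]]
        diag_index[of "Gad u (Suc c) r"] that by fastforce
    show "m - diag_index (Gad u (m - k) k) = k" if "k \<le> m" for k
      using diag_index_eq[of "m - k" "Gad u (m - k) k"] diag_block[of "m - k"] that by simp
  qed (use diag_index_above diag_index_below that in auto)
  have index_col': "diag_index (Gad u r c) = k \<longleftrightarrow> c = m - k" if "r \<le> m" "c \<le> m" "k \<le> m" for r c k
    using index_col[OF that(2,1)] diag_index[of "Gad u r c"] that by auto
  have "diag_block k = (\<lambda>j. Gad u j (m - k)) ` {..m}" if "k \<le> m" for k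
  proof (intro equalityI subsetI)
    fix x assume "x \<in> diag_block k"
    then have "x \<in> gadV m u" "diag_index x = k" using diag_block_eq_level_set[OF that] by auto
    then show "x \<in> (\<lambda>j. Gad u j (m - k)) ` {..m}"
      using gadV_elem[of x] index_col' that by (metis atMost_iff image_eqI)
  next
    fix x assume "x \<in> (\<lambda>j. Gad u j (m - k)) ` {..m}"
    then obtain j where "j \<le> m" "x = Gad u j (m - k)" by auto
    then show "x \<in> diag_block k" using diag_block_eq_level_set[OF that] index_col' that by simp
  qed
  then have "diag_block ` {..m} = (\<lambda>i. (\<lambda>j. Gad u j i) ` {..m}) ` (\<lambda>k. m - k) ` {..m}"
    unfolding image_image by (intro image_cong) auto
  also have "(\<lambda>k. m - k) ` {..m} = {..m}"
  proof (intro equalityI subsetI)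
    fix i assume "i \<in> {..m}"
    then show "i \<in> (\<lambda>k. m - k) ` {..m}" by (intro image_eqI[of _ _ "m - i"]) auto
  qed auto
  finally have "diag_block ` {..m} = gadR m u" unfolding gadR_eq_image .
  with sigma_eq_diag_blocks show ?thesis by (rule trans)
qed

theorem rows_or_cols: "\<sigma> = gadL m u \<or> \<sigma> = gadR m u"
  using orientation_uniform rows_if_forward cols_if_backward by blast

end

lemma PA_not_into_ArcV: "(x, ArcV a) \<notin> PA V E e"
  unfolding PA_def gadE_def by auto

lemma PA_from_Gad: "(Gad v i j, y) \<in> PA V E e \<Longrightarrow> (Gad v i j, y) \<in> gadE (card E) v"
  unfolding PA_def gadE_def by auto

lemma PA_from_ArcV:
  "(ArcV a, y) \<in> PA V E e \<Longrightarrow> a \<in> E \<and> (y = Gad (fst a) (e a) 0 \<or> y = Gad (snd a) 0 (e a))"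
  unfolding PA_def gadE_def by auto

lemma PA_into_Gad:
  assumes "(x, Gad v i j) \<in> PA V E e"
  shows "(x, Gad v i j) \<in> gadE (card E) v
       \<or> (\<exists>w. x = ArcV (v, w) \<and> (v, w) \<in> E \<and> e (v, w) = i \<and> j = 0)
       \<or> (\<exists>w. x = ArcV (w, v) \<and> (w, v) \<in> E \<and> i = 0 \<and> e (w, v) = j)"
  using assms unfolding PA_def by (auto simp: gadE_iff)

lemma gadE_subset_PA: "v \<in> V \<Longrightarrow> gadE (card E) v \<subseteq> PA V E e"
  unfolding PA_def by auto

lemma Gad_in_PV: "Gad v i j \<in> PV V E \<longleftrightarrow> v \<in> V \<and> i \<le> card E \<and> j \<le> card E"
  unfolding PV_def gadV_def by auto

lemma ArcV_in_PV: "ArcV a \<in> PV V E \<longleftrightarrow> a \<in> E"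
  unfolding PV_def gadV_def by auto

lemma gadV_subset_PV: "v \<in> V \<Longrightarrow> gadV (card E) v \<subseteq> PV V E"
  unfolding PV_def by auto

lemma finite_PV: "std_graph V E e \<Longrightarrow> finite (PV V E)"
proof -
  assume "std_graph V E e"
  then have "finite V" "finite E" unfolding std_graph_def using finite_subset[of E "V \<times> V"] by auto
  then show ?thesis unfolding PV_def using finite_gadV by auto
qed

lemma successively_PA_in_gadget:
  "successively (\<lambda>x y. (x, y) \<in> PA V E e) xs \<Longrightarrow> xs \<noteq> [] \<Longrightarrow> hd xs \<in> gadV (card E) v
    \<Longrightarrow> set xs \<subseteq> gadV (card E) v"
proof (induction xs rule: induct_list012)
  case (3 x y ys)
  obtain i j where "x = Gad v i j" using gadV_elem[OF "3.prems"(3)[simplified]] by blast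
  then have "y \<in> gadV (card E) v" using PA_from_Gad[of v i j y] "3.prems"(1) gadE_in_gadV by force
  then show ?case using "3.IH"(2) "3.prems" by simp
qed auto

definition gad_star :: "('v \<times> 'v) set \<Rightarrow> 'v \<Rightarrow> 'v pvert set" where
  "gad_star E u = gadV (card E) u \<union> ArcV ` {a \<in> E. fst a = u \<or> snd a = u}"

lemma has_ham_path_PA_diff_ArcV:
  assumes "has_ham_path (PA V E e) P" and "Y \<subseteq> range ArcV"
  shows "has_ham_path (PA V E e) (P - Y)"
proof -
  obtain xs where xs: "distinct xs" "set xs = P" and path: "successively (\<lambda>x y. (x, y) \<in> PA V E e) xs"
    using assms(1) unfolding has_ham_path_successively by blast
  show ?thesis
  proof (cases xs)
    case (Cons x ys)
    have notY: "y \<notin> Y" if "y \<in> set ys" for y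
    proof -
      obtain k where "k < length ys" "y = ys ! k" using \<open>y \<in> set ys\<close> by (metis in_set_conv_nth)
      then have "(xs ! k, y) \<in> PA V E e" using successively_nth[OF path, of k] Cons by simp
      then show ?thesis using assms(2) PA_not_into_ArcV by blast
    qed
    show ?thesis
    proof (cases "x \<in> Y")
      case True
      then have "P - Y = set ys" using notY xs Cons by auto
      moreover have "successively (\<lambda>x y. (x, y) \<in> PA V E e) ys"
        using path Cons by (auto simp: successively_Cons)
      ultimately show ?thesis using xs Cons unfolding has_ham_path_successively by auto
    next
      case False
      then have "P - Y = P" using notY xs Cons by auto
      then show ?thesis using assms(1) by simp
    qed
  qed (use assms(1) xs in simp)
qed

lemma successively_PA_from_Gad_in_gadget:
  assumes "successively (\<lambda>x y. (x, y) \<in> PA V E e) xs" and "xs \<noteq> []" and "hd xs \<in> PV V E - range ArcV"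
  obtains w where "set xs \<subseteq> gadV (card E) w"
proof -
  obtain w i j where w: "hd xs = Gad w i j" using assms(3) by (cases "hd xs") auto
  then have "hd xs \<in> gadV (card E) w" using assms(3) by (simp add: Gad_in_PV)
  then show ?thesis by (rule that[OF successively_PA_in_gadget[OF assms(1,2)]])
qed

lemma block_meeting_gadget_subset_star:
  assumes "has_ham_path (PA V E e) P" and "P \<subseteq> PV V E" and meet: "P \<inter> gadV (card E) u \<noteq> {}"
  shows "P \<subseteq> gad_star E u"
proof -
  obtain xs where xs: "set xs = P" and path: "successively (\<lambda>x y. (x, y) \<in> PA V E e) xs"
    using assms(1) unfolding has_ham_path_successively by blast
  from meet xs obtain x ys where Cons: "xs = x # ys" by (cases xs) auto
  have gadget_u: "set zs \<subseteq> gadV (card E) u" if "set zs \<subseteq> gadV (card E) w" "set zs \<inter> gadV (card E) u \<noteq> {}"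
    for zs w
    using that gadV_disjoint[of u w "card E"] by blast
  show ?thesis
  proof (cases "x \<in> range ArcV")
    case False
    then obtain w where "set xs \<subseteq> gadV (card E) w"
      using successively_PA_from_Gad_in_gadget[OF path] Cons xs assms(2) by auto
    then show ?thesis using gadget_u meet xs unfolding gad_star_def by blast
  next
    case True
    then obtain a where a: "x = ArcV a" by blast
    have "ys \<noteq> []" using meet xs Cons a by auto
    then have arc: "(ArcV a, hd ys) \<in> PA V E e" using path Cons a by (simp add: successively_Cons)
    have path': "successively (\<lambda>x y. (x, y) \<in> PA V E e) ys"
      using path Cons by (auto simp: successively_Cons)
    have "hd ys \<in> PV V E - range ArcV"
      using assms(2) xs Cons \<open>ys \<noteq> []\<close> PA_not_into_ArcV[of "ArcV a" _ V E e] arc by auto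
    then obtain w where "set ys \<subseteq> gadV (card E) w"
      using successively_PA_from_Gad_in_gadget[OF path' \<open>ys \<noteq> []\<close>] by blast
    moreover have "set ys \<inter> gadV (card E) u \<noteq> {}" using meet xs Cons a by auto
    ultimately have ys: "set ys \<subseteq> gadV (card E) u" by (rule gadget_u)
    then have "hd ys \<in> gadV (card E) u" using \<open>ys \<noteq> []\<close> by auto
    then have "a \<in> E \<and> (fst a = u \<or> snd a = u)" using PA_from_ArcV[OF arc] by auto
    then show ?thesis using ys xs Cons a unfolding gad_star_def by auto
  qed
qed

lemma has_ham_path_diff_gad_star:
  assumes "has_ham_path (PA V E e) P" and "P \<subseteq> PV V E" and "P - gad_star E u \<noteq> {}"
  shows "has_ham_path (PA V E e) (P - gad_star E u)"
proof -
  have "P \<inter> gadV (card E) u = {}" using block_meeting_gadget_subset_star[OF assms(1,2)] assms(3) by blast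
  then have "P - gad_star E u = P - ArcV ` {a \<in> E. fst a = u \<or> snd a = u}" unfolding gad_star_def by blast
  moreover have "has_ham_path (PA V E e) (P - ArcV ` {a \<in> E. fst a = u \<or> snd a = u})"
    by (rule has_ham_path_PA_diff_ArcV[OF assms(1)]) blast
  ultimately show ?thesis by simp
qed

lemma restr_gad_eq_image: "restr_gad m \<pi> v = (\<lambda>P. P \<inter> gadV m v) ` \<pi> - {{}}"
  unfolding restr_gad_def by auto

lemma mem_restr_gad: "R \<in> restr_gad m \<pi> w \<longleftrightarrow> (\<exists>P\<in>\<pi>. R = P \<inter> gadV m w \<and> R \<noteq> {})"
  unfolding restr_gad_def by auto

lemma H_star_partition_restr_gad:
  assumes u: "u \<in> V" and H: "H_star_partition (PV V E) (PA V E e) \<pi>"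
  shows "H_star_partition (gadV (card E) u) (gadE (card E) u) (restr_gad (card E) \<pi> u)"
proof -
  let ?G = "gadV (card E) u" and ?\<sigma> = "restr_gad (card E) \<pi> u"
  have part: "partition_on (PV V E) \<pi>" and ham: "\<forall>P\<in>\<pi>. has_ham_path (PA V E e) P"
    and acy: "acyclic (quotient_arcs (PA V E e) \<pi>)"
    using H unfolding H_star_partition_def by auto
  have "partition_on (?G \<inter> PV V E) ((\<inter>) ?G ` \<pi> - {{}})" by (rule partition_on_restrict[OF part])
  moreover have "?G \<inter> PV V E = ?G" using gadV_subset_PV[OF u] by blast
  moreover have "(\<inter>) ?G ` \<pi> - {{}} = ?\<sigma>" unfolding restr_gad_eq_image by (simp add: Int_commute)
  ultimately have part': "partition_on ?G ?\<sigma>" by simp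
  have "has_ham_path (gadE (card E) u) Q" if "Q \<in> ?\<sigma>" for Q
  proof -
    obtain P where P: "P \<in> \<pi>" "Q = P \<inter> ?G" "P \<inter> ?G \<noteq> {}" using \<open>Q \<in> ?\<sigma>\<close> unfolding mem_restr_gad by blast
    have hamP: "has_ham_path (PA V E e) P" using ham P(1) by blast
    have "P \<subseteq> gad_star E u"
      using block_meeting_gadget_subset_star[OF hamP partition_on_block_subset[OF part P(1)] P(3)] .
    then have "Q = P - range ArcV" using P(2) unfolding gad_star_def by auto
    then have "has_ham_path (PA V E e) Q" using has_ham_path_PA_diff_ArcV[OF hamP, of "range ArcV"] by simp
    moreover have "(x, y) \<in> gadE (card E) u" if "x \<in> Q" "(x, y) \<in> PA V E e" for x y
      using that P(2) gadV_elem[of x] PA_from_Gad by (metis IntD2)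
    ultimately show ?thesis by (rule has_ham_path_mono_on)
  qed
  moreover have "acyclic (quotient_arcs (gadE (card E) u) ?\<sigma>)"
    unfolding restr_gad_eq_image by (rule acyclic_quotient_arcs_shrink[OF acy gadE_subset_PA[OF u]]) blast
  ultimately show ?thesis unfolding H_star_partition_def using part' by blast
qed

lemma card_blocks_in_gad_star:
  assumes std: "std_graph V E e" and u: "u \<in> V" and H: "H_star_partition (PV V E) (PA V E e) \<pi>"
    and not_wo: "\<not> well_oriented (card E) \<pi> u"
  shows "card E + 2 \<le> card {P \<in> \<pi>. P \<subseteq> gad_star E u}"
proof (rule ccontr)
  assume "\<not> card E + 2 \<le> card {P \<in> \<pi>. P \<subseteq> gad_star E u}"
  then have few: "card {P \<in> \<pi>. P \<subseteq> gad_star E u} \<le> Suc (card E)" by simp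
  let ?G = "gadV (card E) u" and ?\<sigma> = "restr_gad (card E) \<pi> u"
  have part: "partition_on (PV V E) \<pi>" and ham: "\<forall>P\<in>\<pi>. has_ham_path (PA V E e) P"
    using H unfolding H_star_partition_def by auto
  have fin: "finite \<pi>" using finite_elements[OF finite_PV[OF std] part] .
  have "?\<sigma> = (\<lambda>P. P \<inter> ?G) ` {P \<in> \<pi>. P \<inter> ?G \<noteq> {}}" unfolding restr_gad_def by blast
  then have "card ?\<sigma> \<le> card {P \<in> \<pi>. P \<inter> ?G \<noteq> {}}" using fin by (simp add: card_image_le)
  also have "\<dots> \<le> card {P \<in> \<pi>. P \<subseteq> gad_star E u}"
  proof (rule card_mono)
    show "{P \<in> \<pi>. P \<inter> ?G \<noteq> {}} \<subseteq> {P \<in> \<pi>. P \<subseteq> gad_star E u}"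
    proof
      fix P assume "P \<in> {P \<in> \<pi>. P \<inter> ?G \<noteq> {}}"
      then have "P \<in> \<pi>" "P \<inter> ?G \<noteq> {}" "P \<subseteq> PV V E" using partition_on_block_subset[OF part] by auto
      then show "P \<in> {P \<in> \<pi>. P \<subseteq> gad_star E u}"
        using block_meeting_gadget_subset_star[of V E e P u] ham by simp
    qed
  qed (use fin in simp)
  also note few
  finally have "grid_partition (card E) u ?\<sigma>"
    using H_star_partition_restr_gad[OF u H] by unfold_locales
  then have "?\<sigma> = gadL (card E) u \<or> ?\<sigma> = gadR (card E) u" by (rule grid_partition.rows_or_cols)
  then show False using not_wo unfolding well_oriented_def by simp
qed

lemma restr_gad_replace_blocks_outside:
  assumes "X \<inter> gadV m w = {}" and "X = (\<Union>i<n. T i)"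
  shows "restr_gad m (replace_blocks X T n \<pi>) w = restr_gad m \<pi> w"
proof -
  have T: "T i \<inter> gadV m w = {}" if "i < n" for i using assms that by blast
  have P: "(P - X) \<inter> gadV m w = P \<inter> gadV m w" for P using assms(1) by blast
  show ?thesis
  proof (intro equalityI subsetI)
    fix R assume "R \<in> restr_gad m (replace_blocks X T n \<pi>) w"
    then obtain Q where Q: "Q \<in> replace_blocks X T n \<pi>" "R = Q \<inter> gadV m w" "R \<noteq> {}"
      by (auto simp: mem_restr_gad)
    then obtain P where "P \<in> \<pi>" "Q = P - X" using T unfolding mem_replace_blocks by auto
    then show "R \<in> restr_gad m \<pi> w" using Q P by (auto simp: mem_restr_gad)
  next
    fix R assume "R \<in> restr_gad m \<pi> w"
    then obtain P where "P \<in> \<pi>" "R = P \<inter> gadV m w" "R \<noteq> {}" by (auto simp: mem_restr_gad)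
    then have "P - X \<in> replace_blocks X T n \<pi>" "R = (P - X) \<inter> gadV m w"
      using P by (auto simp: mem_replace_blocks)
    then show "R \<in> restr_gad m (replace_blocks X T n \<pi>) w" using \<open>R \<noteq> {}\<close> by (auto simp: mem_restr_gad)
  qed
qed

lemma restr_gad_replace_blocks_inside:
  assumes "gadV m w \<subseteq> X"
  shows "restr_gad m (replace_blocks X T n \<pi>) w = {T i \<inter> gadV m w | i. i < n \<and> T i \<inter> gadV m w \<noteq> {}}"
proof -
  have P: "(P - X) \<inter> gadV m w = {}" for P using assms(1) by blast
  show ?thesis
  proof (intro equalityI subsetI)
    fix R assume "R \<in> restr_gad m (replace_blocks X T n \<pi>) w"
    then obtain Q where Q: "Q \<in> replace_blocks X T n \<pi>" "R = Q \<inter> gadV m w" "R \<noteq> {}"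
      by (auto simp: mem_restr_gad)
    then obtain i where "i < n" "Q = T i" using P unfolding mem_replace_blocks by auto
    then show "R \<in> {T i \<inter> gadV m w | i. i < n \<and> T i \<inter> gadV m w \<noteq> {}}" using Q by auto
  next
    fix R assume "R \<in> {T i \<inter> gadV m w | i. i < n \<and> T i \<inter> gadV m w \<noteq> {}}"
    then obtain i where "i < n" "R = T i \<inter> gadV m w" "R \<noteq> {}" by auto
    moreover have "T i \<in> replace_blocks X T n \<pi>" using \<open>i < n\<close> by (auto simp: mem_replace_blocks)
    ultimately show "R \<in> restr_gad m (replace_blocks X T n \<pi>) w" by (auto simp: mem_restr_gad)
  qed
qed

section \<open>Rebuilding the star of a vertex of in-degree 1\<close>

lemma std_graph_e_range: "std_graph V E e \<Longrightarrow> a \<in> E \<Longrightarrow> e a \<le> card E"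
  unfolding std_graph_def using bij_betw_apply by fastforce

lemma std_graph_e_inj: "std_graph V E e \<Longrightarrow> a \<in> E \<Longrightarrow> b \<in> E \<Longrightarrow> e a = e b \<Longrightarrow> a = b"
  unfolding std_graph_def using bij_betw_imp_inj_on inj_onD by metis

definition out_row :: "('v \<times> 'v) set \<Rightarrow> ('v \<times> 'v \<Rightarrow> nat) \<Rightarrow> 'v \<Rightarrow> nat \<Rightarrow> 'v pvert set" where
  "out_row E e u i = (\<lambda>j. Gad u i j) ` {..card E} \<union> ArcV ` {a \<in> E. fst a = u \<and> e a = i}"

lemma has_ham_path_out_row:
  assumes std: "std_graph V E e" and u: "u \<in> V" and i: "i \<le> card E"
  shows "has_ham_path (PA V E e) (out_row E e u i)"
proof -
  let ?row = "map (\<lambda>j. Gad u i j) [0..<Suc (card E)]"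
  have step: "(Gad u i j, Gad u i (Suc j)) \<in> PA V E e" if "j < card E" for j
    using subsetD[OF gadE_subset_PA[OF u] gadE_right[OF i that]] .
  have row: "successively (\<lambda>x y. (x, y) \<in> PA V E e) ?row"
    unfolding successively_map by (rule successively_upt) (simp add: step)
  have row_set: "set ?row = (\<lambda>j. Gad u i j) ` {..card E}" by (simp add: atLeast0LessThan lessThan_Suc_atMost del: upt_Suc)
  have dist: "distinct ?row" by (simp add: distinct_map inj_on_def del: upt_Suc)
  show ?thesis
  proof (cases "\<exists>a\<in>E. fst a = u \<and> e a = i")
    case True
    then obtain w where w: "(u, w) \<in> E" "e (u, w) = i" by auto
    then have "ArcV ` {a \<in> E. fst a = u \<and> e a = i} = {ArcV (u, w)}"
      using std_graph_e_inj[OF std] by auto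
    then have "out_row E e u i = insert (ArcV (u, w)) (set ?row)" unfolding out_row_def row_set by auto
    moreover have "hd ?row = Gad u i 0" by (simp add: upt_conv_Cons del: upt_Suc)
    then have "(ArcV (u, w), hd ?row) \<in> PA V E e" using w unfolding PA_def by auto
    moreover have "ArcV (u, w) \<notin> set ?row" by auto
    ultimately show ?thesis using has_ham_path_Cons[OF row dist, of "ArcV (u, w)"] by (simp del: upt_Suc)
  next
    case False
    then have "out_row E e u i = set ?row" unfolding out_row_def row_set by auto
    then show ?thesis unfolding has_ham_path_successively using row dist by blast
  qed
qed

lemma out_row_disjoint: "i \<noteq> j \<Longrightarrow> out_row E e u i \<inter> out_row E e u j = {}"
  unfolding out_row_def by auto

lemma out_row_inter_gadV: "i \<le> card E \<Longrightarrow> out_row E e u i \<inter> gadV (card E) u = (\<lambda>j. Gad u i j) ` {..card E}"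
  unfolding out_row_def by auto

lemma gad_star_eq_out_rows:
  assumes std: "std_graph V E e" and in_arc: "{w. (w, u) \<in> E} = {v0}"
  shows "gad_star E u = insert (ArcV (v0, u)) (\<Union>i\<le>card E. out_row E e u i)"
proof (intro equalityI subsetI)
  fix x assume "x \<in> gad_star E u"
  then consider (gad) "x \<in> gadV (card E) u" | (arc) a where "x = ArcV a" "a \<in> E" "fst a = u \<or> snd a = u"
    unfolding gad_star_def by blast
  then show "x \<in> insert (ArcV (v0, u)) (\<Union>i\<le>card E. out_row E e u i)"
  proof cases
    case gad then show ?thesis using gadV_elem[of x] unfolding out_row_def by auto
  next
    case arc
    show ?thesis
    proof (cases "fst a = u")
      case True
      then have "x \<in> out_row E e u (e a)" using arc unfolding out_row_def by auto
      then show ?thesis using std_graph_e_range[OF std arc(2)] by blast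
    next
      case False
      then have "a = (v0, u)" using arc in_arc by (cases a) auto
      then show ?thesis using arc by simp
    qed
  qed
next
  fix x assume "x \<in> insert (ArcV (v0, u)) (\<Union>i\<le>card E. out_row E e u i)"
  then show "x \<in> gad_star E u" using in_arc unfolding gad_star_def out_row_def by auto
qed

lemma out_row_predecessor:
  assumes std: "std_graph V E e" and in_arc: "{w. (w, u) \<in> E} = {v0}"
    and xy: "(x, y) \<in> PA V E e" and y: "y \<in> out_row E e u i" and x: "x \<notin> out_row E e u i"
  shows "x = ArcV (v0, u) \<or> (\<exists>j<i. x \<in> out_row E e u j)"
proof -
  obtain j where j: "y = Gad u i j" "j \<le> card E"
    using y PA_not_into_ArcV[of x _ V E e] xy unfolding out_row_def by auto
  from PA_into_Gad[OF xy[unfolded j(1)]] consider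
      (row) "(x, Gad u i j) \<in> gadE (card E) u"
    | (out) w where "x = ArcV (u, w)" "(u, w) \<in> E" "e (u, w) = i"
    | (inn) w where "x = ArcV (w, u)" "(w, u) \<in> E"
    by blast
  then show ?thesis
  proof cases
    case row
    then have "x = Gad u (i - 1) j \<and> 0 < i" using x j(2) unfolding gadE_iff out_row_def by auto
    then show ?thesis unfolding out_row_def using j(2) by (intro disjI2 exI[of _ "i - 1"]) auto
  next
    case out then show ?thesis using x unfolding out_row_def by auto
  next
    case inn then show ?thesis using in_arc by auto
  qed
qed

lemma gad_star_subset_PV: "u \<in> V \<Longrightarrow> gad_star E u \<subseteq> PV V E"
  unfolding gad_star_def using gadV_subset_PV[of u V E] by (auto simp: ArcV_in_PV)

lemma gad_star_inter_gadV: "w \<noteq> u \<Longrightarrow> gad_star E u \<inter> gadV m w = {}"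
  unfolding gad_star_def gadV_def by auto

text \<open>An arc entering block i + 1 from outside comes from the row
  above or from the arc entering u, so these blocks satisfy the hypothesis on predecessors of
  H_star_partition_replace_blocks.\<close>
definition row_blocks :: "('v \<times> 'v) set \<Rightarrow> ('v \<times> 'v \<Rightarrow> nat) \<Rightarrow> 'v \<Rightarrow> 'v \<Rightarrow> nat \<Rightarrow> 'v pvert set" where
  "row_blocks E e v0 u = case_nat {ArcV (v0, u)} (out_row E e u)"

context
  fixes V :: "'v set" and E e u v0
  assumes std: "std_graph V E e" and u: "u \<in> V" and in_arc: "{w. (w, u) \<in> E} = {v0}"
begin

lemma in_arc_notin_out_row: "ArcV (v0, u) \<notin> out_row E e u i"
  using in_arc std unfolding out_row_def std_graph_def by auto

lemma gad_star_eq_row_blocks: "gad_star E u = (\<Union>i<card E + 2. row_blocks E e v0 u i)"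
proof -
  have "{..<card E + 2} = insert 0 (Suc ` {..card E})"
    by (simp only: add_2_eq_Suc' lessThan_Suc_atMost atMost_Suc_eq_insert_0)
  then show ?thesis by (simp add: row_blocks_def gad_star_eq_out_rows[OF std in_arc])
qed

lemma row_blocks_nonempty: "row_blocks E e v0 u i \<noteq> {}"
  unfolding row_blocks_def out_row_def by (cases i) auto

lemma row_blocks_disjoint: "i \<noteq> j \<Longrightarrow> row_blocks E e v0 u i \<inter> row_blocks E e v0 u j = {}"
  unfolding row_blocks_def using out_row_disjoint[of _ _ E e u] in_arc_notin_out_row
  by (cases i; cases j) auto

lemma has_ham_path_row_blocks: "i < card E + 2 \<Longrightarrow> has_ham_path (PA V E e) (row_blocks E e v0 u i)"
  unfolding row_blocks_def using has_ham_path_singleton has_ham_path_out_row[OF std u]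
  by (cases i) auto

lemma row_blocks_predecessor:
  assumes "(x, y) \<in> PA V E e" and "y \<in> row_blocks E e v0 u i" and "x \<notin> row_blocks E e v0 u i"
  shows "\<exists>j<i. x \<in> row_blocks E e v0 u j"
proof (cases i)
  case 0 then show ?thesis using assms(1,2) PA_not_into_ArcV[of x "(v0, u)" V E e] unfolding row_blocks_def by simp
next
  case (Suc k)
  then have "x = ArcV (v0, u) \<or> (\<exists>j<k. x \<in> out_row E e u j)"
    using out_row_predecessor[OF std in_arc assms(1)] assms(2,3) unfolding row_blocks_def by simp
  then show ?thesis unfolding row_blocks_def Suc by auto
qed

lemma row_blocks_restr_gadV:
  "{row_blocks E e v0 u i \<inter> gadV (card E) u | i. i < card E + 2 \<and> row_blocks E e v0 u i \<inter> gadV (card E) u \<noteq> {}}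
    = gadL (card E) u" (is "?lhs = _")
proof -
  have row: "row_blocks E e v0 u (Suc k) \<inter> gadV (card E) u = (\<lambda>j. Gad u k j) ` {..card E}"
    if "k \<le> card E" for k
    using that by (simp add: row_blocks_def out_row_inter_gadV)
  have arc: "row_blocks E e v0 u 0 \<inter> gadV (card E) u = {}" by (simp add: row_blocks_def)
  show ?thesis unfolding gadL_eq_image
  proof (intro equalityI subsetI)
    fix R assume "R \<in> ?lhs"
    then obtain i where i: "i < card E + 2" "R = row_blocks E e v0 u i \<inter> gadV (card E) u" "R \<noteq> {}"
      by blast
    then obtain k where "i = Suc k" "k \<le> card E" using arc by (cases i) auto
    then show "R \<in> (\<lambda>k. (\<lambda>j. Gad u k j) ` {..card E}) ` {..card E}" using i(2) row by simp
  next
    fix R assume "R \<in> (\<lambda>k. (\<lambda>j. Gad u k j) ` {..card E}) ` {..card E}"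
    then obtain k where k: "k \<le> card E" "R = (\<lambda>j. Gad u k j) ` {..card E}" by blast
    then have "Suc k < card E + 2" "R = row_blocks E e v0 u (Suc k) \<inter> gadV (card E) u" "R \<noteq> {}"
      using row by auto
    then show "R \<in> ?lhs" by blast
  qed
qed

end

lemma rebuild_with_rows:
  assumes std: "std_graph V E e" and u: "u \<in> V" and in_arc: "{w. (w, u) \<in> E} = {v0}"
    and H: "H_star_partition (PV V E) (PA V E e) \<pi>" and not_wo: "\<not> well_oriented (card E) \<pi> u"
  shows "\<exists>\<pi>'. H_star_partition (PV V E) (PA V E e) \<pi>' \<and> card \<pi>' \<le> card \<pi>
    \<and> restr_gad (card E) \<pi>' u = gadL (card E) u
    \<and> (\<forall>w. w \<noteq> u \<longrightarrow> restr_gad (card E) \<pi>' w = restr_gad (card E) \<pi> w)"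
proof -
  let ?X = "gad_star E u" and ?T = "row_blocks E e v0 u" and ?n = "card E + 2"
  let ?\<pi>' = "replace_blocks ?X ?T ?n \<pi>"
  note X = gad_star_eq_row_blocks[OF std u in_arc]
  have part: "partition_on (PV V E) \<pi>" and ham: "\<forall>P\<in>\<pi>. has_ham_path (PA V E e) P"
    using H unfolding H_star_partition_def by auto
  have rest_ham: "has_ham_path (PA V E e) (P - ?X)" if "P \<in> \<pi>" "P - ?X \<noteq> {}" for P
    using has_ham_path_diff_gad_star[OF _ partition_on_block_subset[OF part that(1)] that(2)] ham that(1)
    by blast
  have "H_star_partition (PV V E) (PA V E e) ?\<pi>'"
    by (rule H_star_partition_replace_blocks[OF H gad_star_subset_PV[OF u] X])
      (use row_blocks_nonempty[OF std u in_arc] row_blocks_disjoint[OF std u in_arc]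
        has_ham_path_row_blocks[OF std u in_arc] row_blocks_predecessor[OF std u in_arc] rest_ham in auto)
  moreover have "card ?\<pi>' \<le> card \<pi>"
    using card_replace_blocks_le[OF finite_elements[OF finite_PV[OF std] part]]
      card_blocks_in_gad_star[OF std u H not_wo] by simp
  moreover have "restr_gad (card E) ?\<pi>' u = gadL (card E) u"
    using restr_gad_replace_blocks_inside[of "card E" u ?X] row_blocks_restr_gadV[OF std u in_arc]
    unfolding gad_star_def by simp
  moreover have "restr_gad (card E) ?\<pi>' w = restr_gad (card E) \<pi> w" if "w \<noteq> u" for w
    by (rule restr_gad_replace_blocks_outside[OF gad_star_inter_gadV[OF that] X])
  ultimately show ?thesis by blast
qed

section \<open>Transposition\<close>

fun pv_transpose :: "'v pvert \<Rightarrow> 'v pvert" where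
  "pv_transpose (Gad v i j) = Gad v j i"
| "pv_transpose (ArcV a) = ArcV (prod.swap a)"

lemma pv_transpose_pv_transpose [simp]: "pv_transpose (pv_transpose x) = x"
  by (cases x) auto

lemma inj_pv_transpose: "inj pv_transpose"
  by (metis injI pv_transpose_pv_transpose)

lemma involution_image_eq_vimage:
  assumes "\<And>x. f (f x) = x"
  shows "f ` S = f -` S"
proof (intro equalityI subsetI)
  show "x \<in> f -` S" if "x \<in> f ` S" for x using that assms by auto
  show "x \<in> f ` S" if "x \<in> f -` S" for x using that assms by (intro image_eqI[of _ _ "f x"]) simp_all
qed

lemma pv_transpose_image_image [simp]: "(`) pv_transpose ` (`) pv_transpose ` S = S"
  by (simp add: image_image image_comp)

lemma pv_transpose_in_gadV [simp]: "pv_transpose x \<in> gadV m v \<longleftrightarrow> x \<in> gadV m v"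
  by (cases x) auto

lemma pv_transpose_PV: "pv_transpose ` PV V E = PV V (E\<inverse>)"
proof -
  have "pv_transpose x \<in> PV V E \<longleftrightarrow> x \<in> PV V (E\<inverse>)" for x
    by (cases x) (auto simp: Gad_in_PV ArcV_in_PV)
  then show ?thesis unfolding involution_image_eq_vimage[OF pv_transpose_pv_transpose] by auto
qed

lemma pv_transpose_PA: "map_prod pv_transpose pv_transpose ` PA V E e = PA V (E\<inverse>) (e \<circ> prod.swap)"
proof -
  have arc: "(pv_transpose x, pv_transpose y) \<in> PA V E e \<longleftrightarrow> (x, y) \<in> PA V (E\<inverse>) (e \<circ> prod.swap)"
    for x y by (cases x; cases y) (auto simp: PA_def gadE_iff)
  have inv: "map_prod pv_transpose pv_transpose (map_prod pv_transpose pv_transpose p) = p" for p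
    by (cases p) simp
  show ?thesis unfolding involution_image_eq_vimage[OF inv]
  proof (intro set_eqI)
    show "p \<in> map_prod pv_transpose pv_transpose -` PA V E e \<longleftrightarrow> p \<in> PA V (E\<inverse>) (e \<circ> prod.swap)" for p
      by (cases p) (simp add: arc)
  qed
qed

lemma std_graph_converse: "std_graph V E e \<Longrightarrow> std_graph V (E\<inverse>) (e \<circ> prod.swap)"
proof -
  assume std: "std_graph V E e"
  have "prod.swap ` E\<inverse> = E"
  proof (rule set_eqI)
    show "p \<in> prod.swap ` E\<inverse> \<longleftrightarrow> p \<in> E" for p by (cases p) simp
  qed
  then have "bij_betw prod.swap (E\<inverse>) E" by (simp add: bij_betw_def)
  then have "bij_betw (e \<circ> prod.swap) (E\<inverse>) {1..card (E\<inverse>)}"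
    using std unfolding std_graph_def by (auto intro: bij_betw_trans)
  then show ?thesis using std unfolding std_graph_def by auto
qed

lemma H_star_partition_pv_transpose:
  "H_star_partition (PV V E) (PA V E e) \<pi>
    \<Longrightarrow> H_star_partition (PV V (E\<inverse>)) (PA V (E\<inverse>) (e \<circ> prod.swap)) ((`) pv_transpose ` \<pi>)"
  using H_star_partition_inj_image[OF inj_pv_transpose, of "PV V E" "PA V E e" \<pi>]
  by (simp add: pv_transpose_PV pv_transpose_PA)

lemma pv_transpose_gadV: "pv_transpose ` gadV m v = gadV m v"
  by (auto simp: involution_image_eq_vimage[OF pv_transpose_pv_transpose])

lemma restr_gad_pv_transpose:
  "restr_gad m ((`) pv_transpose ` \<pi>) v = (`) pv_transpose ` restr_gad m \<pi> v"
proof -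
  have "pv_transpose ` P \<inter> gadV m v = pv_transpose ` (P \<inter> gadV m v)" for P
    by (simp add: image_Int[OF inj_pv_transpose] pv_transpose_gadV)
  then have "(\<lambda>P. P \<inter> gadV m v) ` (`) pv_transpose ` \<pi> = (`) pv_transpose ` (\<lambda>P. P \<inter> gadV m v) ` \<pi>"
    by (simp add: image_image)
  moreover have "(`) pv_transpose ` S - {{}} = (`) pv_transpose ` (S - {{}})" for S :: "'a pvert set set"
    by auto
  ultimately show ?thesis unfolding restr_gad_eq_image by simp
qed

lemma pv_transpose_gadL: "(`) pv_transpose ` gadL m v = gadR m v"
  by (simp add: gadL_eq_image gadR_eq_image image_image)

lemma pv_transpose_gadR: "(`) pv_transpose ` gadR m v = gadL m v"
  by (simp add: gadL_eq_image gadR_eq_image image_image)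

lemma pv_transpose_image_eq_iff:
  assumes "(`) pv_transpose ` B = C"
  shows "(`) pv_transpose ` S = C \<longleftrightarrow> S = B"
proof
  assume "(`) pv_transpose ` S = C"
  then have "(`) pv_transpose ` (`) pv_transpose ` S = (`) pv_transpose ` (`) pv_transpose ` B"
    using assms by simp
  then show "S = B" by (simp only: pv_transpose_image_image)
qed (use assms in simp)

lemma well_oriented_pv_transpose:
  "well_oriented m ((`) pv_transpose ` \<pi>) v \<longleftrightarrow> well_oriented m \<pi> v"
  unfolding well_oriented_def restr_gad_pv_transpose
    pv_transpose_image_eq_iff[OF pv_transpose_gadL] pv_transpose_image_eq_iff[OF pv_transpose_gadR]
  by blast

lemma card_pv_transpose_image: "card ((`) pv_transpose ` \<pi>) = card \<pi>"
proof -
  have "inj ((`) pv_transpose)" by (rule injI) (simp add: inj_image_eq_iff[OF inj_pv_transpose])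
  then show ?thesis using card_image inj_on_subset by blast
qed

lemma rebuild_well_oriented:
  assumes std: "std_graph V E e" and u: "u \<in> V" and H: "H_star_partition (PV V E) (PA V E e) \<pi>"
    and not_wo: "\<not> well_oriented (card E) \<pi> u"
  shows "\<exists>\<pi>'. H_star_partition (PV V E) (PA V E e) \<pi>' \<and> card \<pi>' \<le> card \<pi>
    \<and> well_oriented (card E) \<pi>' u \<and> (\<forall>w. w \<noteq> u \<longrightarrow> restr_gad (card E) \<pi>' w = restr_gad (card E) \<pi> w)"
proof (cases "card {w. (w, u) \<in> E} = 1")
  case True
  then obtain v0 where "{w. (w, u) \<in> E} = {v0}" by (rule card_1_singletonE)
  from rebuild_with_rows[OF std u this H not_wo] show ?thesis unfolding well_oriented_def by blast
next
  case False
  then have "card {w. (w, u) \<in> E\<inverse>} = 1" using std u unfolding std_graph_def by auto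
  then obtain w0 where in_arc: "{w. (w, u) \<in> E\<inverse>} = {w0}" by (rule card_1_singletonE)
  let ?\<tau> = "(`) pv_transpose ` \<pi>"
  have "\<not> well_oriented (card (E\<inverse>)) ?\<tau> u" using not_wo by (simp add: well_oriented_pv_transpose)
  from rebuild_with_rows[OF std_graph_converse[OF std] u in_arc H_star_partition_pv_transpose[OF H] this]
  obtain \<pi>'' where H'': "H_star_partition (PV V (E\<inverse>)) (PA V (E\<inverse>) (e \<circ> prod.swap)) \<pi>''"
    and card'': "card \<pi>'' \<le> card \<pi>" and rows: "restr_gad (card E) \<pi>'' u = gadL (card E) u"
    and same'': "\<forall>w. w \<noteq> u \<longrightarrow> restr_gad (card E) \<pi>'' w = restr_gad (card E) ?\<tau> w"
    by (auto simp: card_pv_transpose_image)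
  let ?\<pi>' = "(`) pv_transpose ` \<pi>''"
  have "(e \<circ> prod.swap) \<circ> prod.swap = e" by auto
  then have "H_star_partition (PV V E) (PA V E e) ?\<pi>'" using H_star_partition_pv_transpose[OF H''] by simp
  moreover have "card ?\<pi>' \<le> card \<pi>" by (simp only: card_pv_transpose_image card'')
  moreover have "well_oriented (card E) ?\<pi>' u"
    unfolding well_oriented_def restr_gad_pv_transpose rows pv_transpose_gadL by simp
  moreover have "restr_gad (card E) ?\<pi>' w = restr_gad (card E) \<pi> w" if "w \<noteq> u" for w
    using same'' that by (simp add: restr_gad_pv_transpose)
  ultimately show ?thesis by blast
qed

theorem lemma5p8:
  fixes V :: "'v set" and E :: "('v \<times> 'v) set" and e :: "('v \<times> 'v) \<Rightarrow> nat"
    and u :: 'v and \<pi> :: "'v pvert set set"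
  assumes "std_graph V E e"
    and "u \<in> V"
    and "H_star_partition (PV V E) (PA V E e) \<pi>"
    and "\<not> well_oriented (card E) \<pi> u"
  shows "\<exists>\<pi>'. H_star_partition (PV V E) (PA V E e) \<pi>' \<and> card \<pi>' \<le> card \<pi>
           \<and> well_oriented (card E) \<pi>' u
           \<and> (\<forall>w\<in>V. w \<noteq> u \<longrightarrow> (well_oriented (card E) \<pi> w \<longleftrightarrow> well_oriented (card E) \<pi>' w))"
proof -
  obtain \<pi>' where "H_star_partition (PV V E) (PA V E e) \<pi>'" "card \<pi>' \<le> card \<pi>"
    "well_oriented (card E) \<pi>' u" "\<forall>w. w \<noteq> u \<longrightarrow> restr_gad (card E) \<pi>' w = restr_gad (card E) \<pi> w"
    using rebuild_well_oriented[OF assms] by blast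
  then show ?thesis unfolding well_oriented_def by auto
qed

end
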